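(* Let $d,n\ge 1$, let $\mathcal{B}=\{x\in\mathbb{R}^d : x_i\in[\underline{x}_i,\overline{x}_i],\ i=1,\dots,d\}$ be a box with $\underline{x}_i\le \overline{x}_i$, and let $f:\mathbb{R}^d\to\mathbb{R}$ and $f_1,\dots,f_n:\mathbb{R}^d\to\mathbb{R}$ satisfy the assumptions stated in the context (in particular $f$ is a continuous piece-wise function defined in terms of $f_1,\dots,f_n$, each $f_j$ is differentiable on $\mathbb{R}^d$ and analytic along every line, and $\gamma>0$ bounds the second directional derivatives of the $f_j$). Let $\{x_s\}_{s\ge 0}$ be any sequence of iterates generated by the iteration described in the context (the multidimensional algorithm, run without termination). Then every limit point of $\{x_s\}$ is a global minimizer of the problem $f^*:=\min_{x\in\mathcal{B}} f(x)$.
   Context: Assumptions. $f_1,\dots,f_n:\mathbb{R}^d\to\mathbb{R}$ are differentiable on $\mathbb{R}^d$, and each $f_j$ is analytic along every line in $\mathbb{R}^d$, i.e. for every $x\in\mathbb{R}^d$ and $p\in\mathbb{R}^d$ the function $\alpha\mapsto f_j(x+\alpha p)$ is real analytic on $\mathbb{R}$. The function $f:\mathbb{R}^d\to\mathbb{R}$ is continuous and piece-wise defined in terms of $f_1,\dots,f_n$: for every $x,y\in\mathbb{R}^d$, the segment $\{x+t(y-x): t\in[0,1]\}$ can be split into finitely many subintervals $[t_\ell,t_{\ell+1}]$ of $[0,1]$ on each of which $t\mapsto f(x+t(y-x))$ coincides with $t\mapsto f_j(x+t(y-x))$ for some index $j\in\{1,\dots,n\}$ (depending on the subinterval). The scalar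 $\gamma>0$ satisfies $\left|\frac{d^2}{d\alpha^2} f_j(x+\alpha p)\right|\le\gamma$ for all $j=1,\dots,n$, all $x\in\mathbb{R}^d$, all unit vectors $p\in\mathbb{R}^d$ ($\|p\|_2=1$), and all $\alpha\in\mathbb{R}$. Quadratic models. For a point $y\in\mathbb{R}^d$ define $q_y(x):=f(y)+\min_{j=1,\dots,n}\{\nabla f_j(y)^T(x-y)\}-\frac{\gamma}{2}\|x-y\|_2^2$. The iteration (multidimensional algorithm). Pick an arbitrary $x_0\in\mathcal{B}$. For $s=0,1,2,\dots$: set $q_s:=q_{x_s}$, $\overline{q}_s(x):=\max_{k=0,\dots,s} q_k(x)$, choose $x_{s+1}$ to be a global minimizer of $\overline{q}_s$ over $\mathcal{B}$, and set the lower bound $l_{s+1}:=\overline{q}_s(x_{s+1})$ and the upper bound $u_{s+1}:=\min_{k=0,\dots,s+1} f(x_k)$. (In the paper the loop stops once $u_s-l_s\le\epsilon$ for a tolerance $\epsilon>0$; the theorem concerns the infinite sequence $\{x_s\}$ produced when the iteration is continued indefinitely.) *)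

theory Defs
  imports "HOL-Analysis.Analysis"
begin

definition grad :: "('a::real_inner \<Rightarrow> real) \<Rightarrow> 'a \<Rightarrow> 'a" where
  "grad g y = (SOME D. GDERIV g y :> D)"

definition real_analytic :: "(real \<Rightarrow> real) \<Rightarrow> bool" where
  "real_analytic h \<longleftrightarrow>
     (\<forall>t0. \<exists>r>0. \<exists>c::nat \<Rightarrow> real. \<forall>t. \<bar>t - t0\<bar> < r \<longrightarrow>
        (\<lambda>k. c k * (t - t0) ^ k) sums h t)"

definition piecewise_on_segments ::
  "('a::real_vector \<Rightarrow> real) \<Rightarrow> (nat \<Rightarrow> 'a \<Rightarrow> real) \<Rightarrow> nat \<Rightarrow> bool" where
  "piecewise_on_segments f fs n \<longleftrightarrow>
     (\<forall>x y. \<exists>(m::nat) (ts::nat \<Rightarrow> real). ts 0 = 0 \<and> ts m = 1 \<and>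
        (\<forall>l<m. ts l < ts (Suc l)) \<and>
        (\<forall>l<m. \<exists>j\<in>{1..n}. \<forall>t\<in>{ts l..ts (Suc l)}.
             f (x + t *\<^sub>R (y - x)) = fs j (x + t *\<^sub>R (y - x))))"

definition qmodel ::
  "('a::real_inner \<Rightarrow> real) \<Rightarrow> (nat \<Rightarrow> 'a \<Rightarrow> real) \<Rightarrow> nat \<Rightarrow> real \<Rightarrow> 'a \<Rightarrow> 'a \<Rightarrow> real" where
  "qmodel f fs n \<gamma> y x =
     f y + Min ((\<lambda>j. grad (fs j) y \<bullet> (x - y)) ` {1..n}) - \<gamma> / 2 * (norm (x - y))\<^sup>2"

definition qbar ::
  "('a::real_inner \<Rightarrow> real) \<Rightarrow> (nat \<Rightarrow> 'a \<Rightarrow> real) \<Rightarrow> nat \<Rightarrow> real \<Rightarrow> (nat \<Rightarrow> 'a) \<Rightarrow> nat \<Rightarrow> 'a \<Rightarrow> real" where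
  "qbar f fs n \<gamma> xs s x = Max ((\<lambda>k. qmodel f fs n \<gamma> (xs k) x) ` {0..s})"

end

theory Submission
  imports Defs
begin

text \<open>
  Every model \<open>q\<^sub>y\<close> underestimates \<open>f\<close> everywhere: along the segment from \<open>y\<close> to \<open>x\<close>,
  \<open>f\<close> agrees piecewise with some \<open>f\<^sub>j\<close>, and on each piece the slope of
  \<open>t \<mapsto> f\<^sub>j(y + t(x - y))\<close> is at least \<open>\<nabla>f\<^sub>j(y)\<cdot>(x - y) - \<gamma> t \<parallel>x - y\<parallel>\<^sup>2\<close>, since analyticity
  along lines makes the bounded second directional derivative a genuine derivative of the first.
  As \<open>x\<^sub>s\<^sub>+\<^sub>1\<close> minimises \<open>max\<^sub>k\<^sub>\<le>\<^sub>s q\<^sub>x\<^sub>k\<close> over the box, \<open>q\<^sub>x\<^sub>k(x\<^sub>s\<^sub>+\<^sub>1) \<le> f(z)\<close> for all \<open>k \<le> s\<close>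
  and all \<open>z\<close> in the box. Conversely, the descent lemma gives
  \<open>q\<^sub>y(x) \<ge> f(y) - \<Sum>\<^sub>j |f\<^sub>j(x) - f\<^sub>j(y)| - \<gamma>\<parallel>x - y\<parallel>\<^sup>2\<close>, which is continuous in \<open>(y, x)\<close> and
  equals \<open>f(y)\<close> on the diagonal. Taking \<open>y, x\<close> to be consecutive terms of a subsequence
  converging to \<open>x\<^sup>*\<close> and passing to the limit yields \<open>f(x\<^sup>*) \<le> f(z)\<close>.
\<close>

definition bounded_curvature_on_lines :: "real \<Rightarrow> ('a::euclidean_space \<Rightarrow> real) \<Rightarrow> bool" where
  "bounded_curvature_on_lines \<gamma> g \<longleftrightarrow>
     (\<forall>x. g differentiable (at x)) \<and>
     (\<forall>x p. real_analytic (\<lambda>\<alpha>. g (x + \<alpha> *\<^sub>R p))) \<and>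
     (\<forall>x p \<alpha>. norm p = 1 \<longrightarrow> \<bar>(deriv ^^ 2) (\<lambda>a. g (x + a *\<^sub>R p)) \<alpha>\<bar> \<le> \<gamma>)"

lemma has_gderiv_grad:
  fixes g :: "'a::euclidean_space \<Rightarrow> real"
  assumes "g differentiable (at y)"
  shows "GDERIV g y :> grad g y"
proof -
  obtain D where D: "(g has_derivative D) (at y)"
    using assms by (auto simp: differentiable_def)
  have "D = (\<lambda>h. h \<bullet> adjoint D 1)"
    using adjoint_works[OF has_derivative_linear[OF D]] by auto
  then have "GDERIV g y :> adjoint D 1"
    using D by (simp add: gderiv_def)
  then show ?thesis
    unfolding grad_def by (rule someI)
qed

lemma has_real_derivative_along_line:
  fixes g :: "'a::euclidean_space \<Rightarrow> real"
  assumes "g differentiable (at (y + t *\<^sub>R v))"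
  shows "((\<lambda>s. g (y + s *\<^sub>R v)) has_real_derivative grad g (y + t *\<^sub>R v) \<bullet> v) (at t)"
proof -
  have "(g has_derivative (\<lambda>h. h \<bullet> grad g (y + t *\<^sub>R v))) (at (y + t *\<^sub>R v))"
    using has_gderiv_grad[OF assms] by (simp add: gderiv_def)
  moreover have "((\<lambda>s. y + s *\<^sub>R v) has_derivative (\<lambda>s. s *\<^sub>R v)) (at t)"
    by (auto intro!: derivative_eq_intros)
  ultimately have "((\<lambda>s. g (y + s *\<^sub>R v)) has_derivative (\<lambda>s. (s *\<^sub>R v) \<bullet> grad g (y + t *\<^sub>R v))) (at t)"
    using has_derivative_compose by blast
  then show ?thesis
    unfolding has_field_derivative_def
    by (rule has_derivative_eq_rhs) (auto simp: fun_eq_iff inner_commute)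
qed

lemma real_analytic_deriv_has_derivative:
  assumes "real_analytic h"
  shows "(deriv h has_real_derivative deriv (deriv h) t0) (at t0)"
proof -
  obtain r c where r: "r > 0"
    and h_sums: "\<And>t. \<bar>t - t0\<bar> < r \<Longrightarrow> (\<lambda>k. c k * (t - t0) ^ k) sums h t"
    using assms unfolding real_analytic_def by blast
  define P1 where "P1 u = (\<Sum>k. diffs c k * u ^ k)" for u :: real
  have summable: "summable (\<lambda>k. c k * u ^ k)" if "norm u < r" for u :: real
    using h_sums[of "t0 + u"] that by (auto dest: sums_summable)
  have shift: "((\<lambda>t. t - t0) has_real_derivative 1) (at t)" for t
    by (auto intro!: derivative_eq_intros)
  have deriv_h: "deriv h t = P1 (t - t0)" if "\<bar>t - t0\<bar> < r" for t
  proof -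
    have "((\<lambda>u. \<Sum>k. c k * u ^ k) has_real_derivative P1 (t - t0)) (at (t - t0))"
      unfolding P1_def by (rule termdiffs_strong'[OF summable]) (use that in auto)
    from DERIV_chain2[where g="\<lambda>t. t - t0" and x=t, OF this shift]
    have "((\<lambda>t. \<Sum>k. c k * (t - t0) ^ k) has_real_derivative P1 (t - t0)) (at t)"
      by simp
    then have "(h has_real_derivative P1 (t - t0)) (at t)"
      by (rule has_field_derivative_transform_within_open[where S="ball t0 r"])
         (use that h_sums in \<open>auto simp: dist_real_def abs_minus_commute sums_iff\<close>)
    then show ?thesis
      by (rule DERIV_imp_deriv)
  qed
  have "(P1 has_real_derivative (\<Sum>k. diffs (diffs c) k * 0 ^ k)) (at 0)"
    unfolding P1_def by (rule termdiffs_strong'[OF termdiff_converges[OF _ summable]]) (use r in auto)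
  from DERIV_chain2[where g="\<lambda>t. t - t0" and x=t0, simplified, OF this shift]
  have "((\<lambda>t. P1 (t - t0)) has_real_derivative (\<Sum>k. diffs (diffs c) k * 0 ^ k)) (at t0)"
    by simp
  then have "(deriv h has_real_derivative (\<Sum>k. diffs (diffs c) k * 0 ^ k)) (at t0)"
    by (rule has_field_derivative_transform_within_open[where S="ball t0 r"])
       (use r deriv_h in \<open>auto simp: dist_real_def abs_minus_commute\<close>)
  then show ?thesis
    using DERIV_deriv_iff_has_field_derivative by blast
qed

lemma real_analytic_deriv_lipschitz:
  fixes \<psi> :: "real \<Rightarrow> real"
  assumes "real_analytic \<psi>" "\<And>t. \<bar>deriv (deriv \<psi>) t\<bar> \<le> \<gamma>"
  shows "\<bar>deriv \<psi> a - deriv \<psi> b\<bar> \<le> \<gamma> * \<bar>a - b\<bar>"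
  using field_differentiable_bound[of UNIV "deriv \<psi>" "deriv (deriv \<psi>)" \<gamma> a b]
    real_analytic_deriv_has_derivative[OF assms(1)] assms(2)
  by (auto simp: has_field_derivative_at_within)

lemma grad_inner_lipschitz_on_line:
  assumes "bounded_curvature_on_lines \<gamma> g"
  shows "\<bar>grad g (y + s *\<^sub>R v) \<bullet> v - grad g (y + t *\<^sub>R v) \<bullet> v\<bar> \<le> \<gamma> * \<bar>s - t\<bar> * (norm v)\<^sup>2"
proof (cases "v = 0")
  case False
  define L where "L = norm v"
  define p where "p = v /\<^sub>R L"
  define \<psi> where "\<psi> = (\<lambda>a. g (y + a *\<^sub>R p))"
  have L: "L > 0" and p: "norm p = 1" and v: "v = L *\<^sub>R p"
    using False by (auto simp: L_def p_def)
  have "deriv \<psi> a = grad g (y + a *\<^sub>R p) \<bullet> p" for a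
    unfolding \<psi>_def using assms
    by (intro DERIV_imp_deriv has_real_derivative_along_line)
       (auto simp: bounded_curvature_on_lines_def)
  then have grad_\<psi>: "grad g (y + s *\<^sub>R v) \<bullet> v = L * deriv \<psi> (s * L)" for s
    by (simp add: v inner_scaleR_right)
  have "\<bar>deriv \<psi> (s * L) - deriv \<psi> (t * L)\<bar> \<le> \<gamma> * \<bar>s * L - t * L\<bar>"
    using assms p
    by (intro real_analytic_deriv_lipschitz)
       (auto simp: bounded_curvature_on_lines_def \<psi>_def numeral_2_eq_2)
  then have "L * \<bar>deriv \<psi> (s * L) - deriv \<psi> (t * L)\<bar> \<le> L * (\<gamma> * \<bar>s * L - t * L\<bar>)"
    using L by (intro mult_left_mono) auto
  then show ?thesis
    using L by (simp add: grad_\<psi> L_def[symmetric] abs_mult power2_eq_square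
        right_diff_distrib[symmetric] left_diff_distrib[symmetric] mult_ac)
qed simp

lemma DERIV_abs_le_linear_imp_increment_le:
  fixes \<phi> \<phi>' :: "real \<Rightarrow> real"
  assumes "a \<le> b"
    and deriv: "\<And>t. t \<in> {a..b} \<Longrightarrow> (\<phi> has_real_derivative \<phi>' t) (at t)"
    and bound: "\<And>t. t \<in> {a..b} \<Longrightarrow> \<bar>\<phi>' t\<bar> \<le> K * t"
  shows "\<bar>\<phi> b - \<phi> a\<bar> \<le> K / 2 * (b\<^sup>2 - a\<^sup>2)"
proof -
  have "K / 2 * a\<^sup>2 + \<sigma> * \<phi> a \<le> K / 2 * b\<^sup>2 + \<sigma> * \<phi> b" if "\<bar>\<sigma>\<bar> = 1" for \<sigma> :: real
  proof (rule deriv_nonneg_imp_mono[where g="\<lambda>t. K / 2 * t\<^sup>2 + \<sigma> * \<phi> t", OF _ _ \<open>a \<le> b\<close>])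
    fix t assume t: "t \<in> {a..b}"
    show "((\<lambda>t. K / 2 * t\<^sup>2 + \<sigma> * \<phi> t) has_real_derivative K * t + \<sigma> * \<phi>' t) (at t)"
      using deriv[OF t] by (auto intro!: derivative_eq_intros)
    have "\<bar>\<sigma> * \<phi>' t\<bar> \<le> K * t"
      using bound[OF t] that by (simp add: abs_mult)
    then show "0 \<le> K * t + \<sigma> * \<phi>' t"
      by linarith
  qed
  from this[of 1] this[of "-1"] show ?thesis
    unfolding abs_le_iff by (simp add: right_diff_distrib)
qed

lemma grad_line_increment_bound:
  assumes "bounded_curvature_on_lines \<gamma> g" "0 \<le> a" "a \<le> b"
  shows "\<bar>g (y + b *\<^sub>R v) - g (y + a *\<^sub>R v) - (b - a) * (grad g y \<bullet> v)\<bar>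
           \<le> \<gamma> / 2 * (norm v)\<^sup>2 * (b\<^sup>2 - a\<^sup>2)"
proof -
  let ?\<phi> = "\<lambda>t. g (y + t *\<^sub>R v) - t * (grad g y \<bullet> v)"
  have "\<bar>?\<phi> b - ?\<phi> a\<bar> \<le> \<gamma> * (norm v)\<^sup>2 / 2 * (b\<^sup>2 - a\<^sup>2)"
  proof (rule DERIV_abs_le_linear_imp_increment_le[OF \<open>a \<le> b\<close>])
    fix t
    show "(?\<phi> has_real_derivative grad g (y + t *\<^sub>R v) \<bullet> v - grad g y \<bullet> v) (at t)"
      using assms(1) unfolding bounded_curvature_on_lines_def
      by (auto intro!: derivative_eq_intros has_real_derivative_along_line)
    assume "t \<in> {a..b}"
    then show "\<bar>grad g (y + t *\<^sub>R v) \<bullet> v - grad g y \<bullet> v\<bar> \<le> \<gamma> * (norm v)\<^sup>2 * t"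
      using grad_inner_lipschitz_on_line[OF assms(1), of y t v 0] \<open>0 \<le> a\<close> by (simp add: mult_ac)
  qed
  then show ?thesis
    by (simp add: algebra_simps)
qed

corollary descent_lemma:
  assumes "bounded_curvature_on_lines \<gamma> g"
  shows "g (y + v) \<le> g y + grad g y \<bullet> v + \<gamma> / 2 * (norm v)\<^sup>2"
  using abs_le_D1[OF grad_line_increment_bound[OF assms, of 0 1 y v]] by simp

lemma qmodel_le:
  fixes f :: "'a::euclidean_space \<Rightarrow> real"
  assumes "n \<ge> 1"
    and pieces: "\<forall>j\<in>{1..n}. bounded_curvature_on_lines \<gamma> (fs j)"
    and "piecewise_on_segments f fs n"
  shows "qmodel f fs n \<gamma> y x \<le> f x"
proof -
  define v where "v = x - y"
  define m where "m = Min ((\<lambda>j. grad (fs j) y \<bullet> v) ` {1..n})"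
  define \<Psi> where "\<Psi> t = f (y + t *\<^sub>R v) - m * t + \<gamma> / 2 * (norm v)\<^sup>2 * t\<^sup>2" for t
  obtain M ts where ts0: "ts 0 = 0" and tsM: "ts M = 1" and inc: "\<forall>l<M. ts l < ts (Suc l)"
    and pc: "\<forall>l<M. \<exists>j\<in>{1..n}. \<forall>t\<in>{ts l..ts (Suc l)}. f (y + t *\<^sub>R v) = fs j (y + t *\<^sub>R v)"
    using assms(3) unfolding piecewise_on_segments_def v_def by blast
  have piece: "\<Psi> (ts l) \<le> \<Psi> (ts (Suc l))" if "l < M" "0 \<le> ts l" for l
  proof -
    obtain j where j: "j \<in> {1..n}"
      and fj: "\<forall>t\<in>{ts l..ts (Suc l)}. f (y + t *\<^sub>R v) = fs j (y + t *\<^sub>R v)"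
      using pc \<open>l < M\<close> by blast
    have ts_le: "ts l \<le> ts (Suc l)"
      using inc \<open>l < M\<close> by (simp add: less_imp_le)
    have "m \<le> grad (fs j) y \<bullet> v"
      unfolding m_def using j by (intro Min_le) auto
    then have "(ts (Suc l) - ts l) * m \<le> (ts (Suc l) - ts l) * (grad (fs j) y \<bullet> v)"
      using ts_le by (intro mult_left_mono) auto
    moreover have "(ts (Suc l) - ts l) * (grad (fs j) y \<bullet> v)
        - \<gamma> / 2 * (norm v)\<^sup>2 * ((ts (Suc l))\<^sup>2 - (ts l)\<^sup>2)
        \<le> fs j (y + ts (Suc l) *\<^sub>R v) - fs j (y + ts l *\<^sub>R v)"
      using abs_le_D2[OF grad_line_increment_bound[OF pieces[rule_format, OF j]
          \<open>0 \<le> ts l\<close> ts_le, where y=y and v=v]]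
      by simp
    ultimately show ?thesis
      using fj ts_le unfolding \<Psi>_def by (simp add: algebra_simps)
  qed
  have "0 \<le> ts l \<and> \<Psi> 0 \<le> \<Psi> (ts l)" if "l \<le> M" for l
    using that
  proof (induction l)
    case 0
    then show ?case using ts0 by simp
  next
    case (Suc l)
    then have "l < M" "0 \<le> ts l" "\<Psi> 0 \<le> \<Psi> (ts l)" by auto
    with piece[of l] inc show ?case by fastforce
  qed
  from this[of M] have "\<Psi> 0 \<le> \<Psi> 1"
    using tsM by simp
  then show ?thesis
    unfolding \<Psi>_def qmodel_def m_def v_def by simp
qed

definition qmodel_minorant ::
  "('a::real_normed_vector \<Rightarrow> real) \<Rightarrow> (nat \<Rightarrow> 'a \<Rightarrow> real) \<Rightarrow> nat \<Rightarrow> real \<Rightarrow> 'a \<Rightarrow> 'a \<Rightarrow> real" where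
  "qmodel_minorant f fs n \<gamma> y x =
     f y - (\<Sum>j\<in>{1..n}. \<bar>fs j x - fs j y\<bar>) - \<gamma> * (norm (x - y))\<^sup>2"

lemma qmodel_minorant_le_qmodel:
  assumes "n \<ge> 1" "\<forall>j\<in>{1..n}. bounded_curvature_on_lines \<gamma> (fs j)"
  shows "qmodel_minorant f fs n \<gamma> y x \<le> qmodel f fs n \<gamma> y x"
proof -
  have "- (\<Sum>j\<in>{1..n}. \<bar>fs j x - fs j y\<bar>) - \<gamma> / 2 * (norm (x - y))\<^sup>2
      \<le> Min ((\<lambda>j. grad (fs j) y \<bullet> (x - y)) ` {1..n})"
  proof (subst Min_ge_iff, safe)
    fix j assume j: "j \<in> {1..n}"
    have "fs j x \<le> fs j y + grad (fs j) y \<bullet> (x - y) + \<gamma> / 2 * (norm (x - y))\<^sup>2"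
      using descent_lemma[OF assms(2)[rule_format, OF j], of y "x - y"] by simp
    moreover have "\<bar>fs j x - fs j y\<bar> \<le> (\<Sum>j\<in>{1..n}. \<bar>fs j x - fs j y\<bar>)"
      by (rule member_le_sum[OF j]) auto
    ultimately show "- (\<Sum>j\<in>{1..n}. \<bar>fs j x - fs j y\<bar>) - \<gamma> / 2 * (norm (x - y))\<^sup>2
        \<le> grad (fs j) y \<bullet> (x - y)"
      by linarith
  qed (use assms(1) in auto)
  then show ?thesis
    unfolding qmodel_def qmodel_minorant_def by simp
qed

lemma tendsto_qmodel_minorant_diagonal:
  assumes "isCont f x" "\<forall>j\<in>{1..n}. isCont (fs j) x"
    and "a \<longlonglongrightarrow> x" "b \<longlonglongrightarrow> x"
  shows "(\<lambda>i. qmodel_minorant f fs n \<gamma> (a i) (b i)) \<longlonglongrightarrow> f x"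
proof -
  have "(\<lambda>i. qmodel_minorant f fs n \<gamma> (a i) (b i)) \<longlonglongrightarrow> qmodel_minorant f fs n \<gamma> x x"
    unfolding qmodel_minorant_def using assms
    by (intro tendsto_intros isCont_tendsto_compose[of _ f] isCont_tendsto_compose[of _ "fs _"]) auto
  then show ?thesis
    by (simp add: qmodel_minorant_def)
qed

lemma qmodel_iterates_le:
  assumes "\<And>y. qmodel f fs n \<gamma> y z \<le> f z"
    and "\<forall>s. qbar f fs n \<gamma> xs s (xs (Suc s)) \<le> qbar f fs n \<gamma> xs s z"
    and "k < m"
  shows "qmodel f fs n \<gamma> (xs k) (xs m) \<le> f z"
proof -
  obtain s where s: "m = Suc s" "k \<le> s"
    using \<open>k < m\<close> by (cases m) auto
  have "qmodel f fs n \<gamma> (xs k) (xs (Suc s)) \<le> qbar f fs n \<gamma> xs s (xs (Suc s))"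
    unfolding qbar_def using \<open>k \<le> s\<close> by (intro Max_ge) auto
  also have "\<dots> \<le> qbar f fs n \<gamma> xs s z"
    using assms(2) by blast
  also have "\<dots> \<le> f z"
    unfolding qbar_def using assms(1) by (subst Max_le_iff) auto
  finally show ?thesis
    unfolding s(1) .
qed

theorem theorem5p1:
  fixes f :: "'a::euclidean_space \<Rightarrow> real"
    and fs :: "nat \<Rightarrow> 'a \<Rightarrow> real"
    and n :: nat and \<gamma> :: real
    and lo hi :: 'a
    and xs :: "nat \<Rightarrow> 'a"
  assumes n_pos: "n \<ge> 1"
    and box: "\<forall>i\<in>Basis. lo \<bullet> i \<le> hi \<bullet> i"
    and diff: "\<forall>j\<in>{1..n}. \<forall>x. fs j differentiable (at x)"
    and analytic: "\<forall>j\<in>{1..n}. \<forall>x p. real_analytic (\<lambda>\<alpha>. fs j (x + \<alpha> *\<^sub>R p))"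
    and f_cont: "continuous_on UNIV f"
    and piecewise: "piecewise_on_segments f fs n"
    and gamma_pos: "\<gamma> > 0"
    and gamma_bound: "\<forall>j\<in>{1..n}. \<forall>x p \<alpha>. norm p = 1 \<longrightarrow>
        \<bar>(deriv ^^ 2) (\<lambda>a. fs j (x + a *\<^sub>R p)) \<alpha>\<bar> \<le> \<gamma>"
    and x0: "xs 0 \<in> cbox lo hi"
    and step: "\<forall>s. xs (Suc s) \<in> cbox lo hi \<and>
        (\<forall>z\<in>cbox lo hi. qbar f fs n \<gamma> xs s (xs (Suc s)) \<le> qbar f fs n \<gamma> xs s z)"
  shows "\<forall>xstar. (\<exists>r. strict_mono r \<and> (xs \<circ> r) \<longlonglongrightarrow> xstar) \<longrightarrow>
           xstar \<in> cbox lo hi \<and> (\<forall>z\<in>cbox lo hi. f xstar \<le> f z)"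
proof (intro allI impI)
  fix xstar
  assume "\<exists>r. strict_mono r \<and> (xs \<circ> r) \<longlonglongrightarrow> xstar"
  then obtain r where r: "strict_mono r" and lim: "(\<lambda>i. xs (r i)) \<longlonglongrightarrow> xstar"
    by (auto simp: o_def)
  have pieces: "\<forall>j\<in>{1..n}. bounded_curvature_on_lines \<gamma> (fs j)"
    using diff analytic gamma_bound by (simp add: bounded_curvature_on_lines_def)
  have "xs s \<in> cbox lo hi" for s
    using x0 step by (cases s) auto
  then have "xstar \<in> cbox lo hi"
    by (intro closed_sequentially[OF closed_cbox _ lim]) simp
  moreover have "f xstar \<le> f z" if z: "z \<in> cbox lo hi" for z
  proof (rule LIMSEQ_le_const2)
    show "(\<lambda>i. qmodel_minorant f fs n \<gamma> (xs (r i)) (xs (r (Suc i)))) \<longlonglongrightarrow> f xstar"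
      using f_cont diff lim LIMSEQ_Suc[OF lim]
      by (intro tendsto_qmodel_minorant_diagonal)
         (auto simp: continuous_on_eq_continuous_at differentiable_imp_continuous_within)
    have "qmodel f fs n \<gamma> (xs (r i)) (xs (r (Suc i))) \<le> f z" for i
      using qmodel_le[OF n_pos pieces piecewise] step z strict_monoD[OF r]
      by (intro qmodel_iterates_le) auto
    then show "\<exists>N. \<forall>i\<ge>N. qmodel_minorant f fs n \<gamma> (xs (r i)) (xs (r (Suc i))) \<le> f z"
      using order_trans[OF qmodel_minorant_le_qmodel[OF n_pos pieces]] by blast
  qed
  ultimately show "xstar \<in> cbox lo hi \<and> (\<forall>z\<in>cbox lo hi. f xstar \<le> f z)"
    by blast
qed

end
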